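(* The log-linear model $\mathcal{L}(\widetilde\Phi_k\times\Psi:\ 1\le k\le n-1)$ of strictly positive $L_S$-decomposable distributions on $S_n$ has number of free parameters \[ c_n=\sum_{i=1}^n\left[\binom{n}{i}-1\right]=2^n-n-1. \]
   Context: $S_n$ is the group of permutations of $\{1,\ldots,n\}$. Product partition of the $n\times n$ board: $\mathcal{B}=\mathcal{R}\times\mathcal{C}=(R_i\times C_j)$ for partitions $\mathcal{R},\mathcal{C}$ of $\{1,\ldots,n\}$, with marginal $|\pi_{\mathcal{B}}|=(t_{ij})$, $t_{ij}=|\{s:(s,\pi(s))\in R_i\times C_j\}|$; $U^{\mathcal{B}}=\{v\in\mathbb{R}^{S_n}: |\pi_{\mathcal{B}}|=|\sigma_{\mathcal{B}}|\Rightarrow v(\pi)=v(\sigma)\}$. $\mathcal{L}(\mathcal{B}_1,\ldots,\mathcal{B}_m)$ is the set of strictly positive distributions $p$ on $S_n$ with $\log p\in U:=\mathrm{Span}(U^{\mathcal{B}_1},\ldots,U^{\mathcal{B}_m})$; its number of free parameters is $\dim U-1$. Thin sections $\widetilde\Phi_k=(\{1,\ldots,k\},\{k+1,\ldots,n\})$; full partition $\Psi=(\{1\},\ldots,\{n\})$. *)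

theory Defs
  imports "HOL-Analysis.Analysis" "HOL-Library.Function_Algebras"
begin

text \<open>Permutations of {1..n} are functions nat => nat with p permutes {1..n};
  real vectors indexed by S_n are functions (nat => nat) => real vanishing outside S_n.\<close>

definition Sn :: "nat \<Rightarrow> (nat \<Rightarrow> nat) set" where
  "Sn n = {p. p permutes {1..n}}"

definition marginal :: "(nat \<Rightarrow> nat) \<Rightarrow> nat set \<Rightarrow> nat set \<Rightarrow> nat" where
  "marginal p A B = card {s. s \<in> A \<and> p s \<in> B}"

text \<open>U^B for the product partition B = R x C (R, C partitions of {1..n} given as sets of blocks).\<close>
definition UB :: "nat \<Rightarrow> nat set set \<Rightarrow> nat set set \<Rightarrow> ((nat \<Rightarrow> nat) \<Rightarrow> real) set" where
  "UB n R C = {v. (\<forall>p\<in>Sn n. \<forall>q\<in>Sn n.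
                    (\<forall>A\<in>R. \<forall>B\<in>C. marginal p A B = marginal q A B) \<longrightarrow> v p = v q)
               \<and> (\<forall>p. p \<notin> Sn n \<longrightarrow> v p = 0)}"

definition thin_section :: "nat \<Rightarrow> nat \<Rightarrow> nat set set" where
  "thin_section n k = {{1..k}, {k+1..n}}"

definition full_partition :: "nat \<Rightarrow> nat set set" where
  "full_partition n = {{i} | i. i \<in> {1..n}}"

abbreviation rscale :: "real \<Rightarrow> ((nat \<Rightarrow> nat) \<Rightarrow> real) \<Rightarrow> ((nat \<Rightarrow> nat) \<Rightarrow> real)" where
  "rscale c v \<equiv> (\<lambda>p. c * v p)"

definition log_linear_space :: "nat \<Rightarrow> (nat set set \<times> nat set set) set \<Rightarrow> ((nat \<Rightarrow> nat) \<Rightarrow> real) set" where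
  "log_linear_space n Bs = module.span rscale (\<Union>(R,C)\<in>Bs. UB n R C)"

definition num_free_params :: "nat \<Rightarrow> (nat set set \<times> nat set set) set \<Rightarrow> nat" where
  "num_free_params n Bs = vector_space.dim rscale (log_linear_space n Bs) - 1"

end

theory Submission
  imports Defs "HOL-Combinatorics.Permutations"
begin

(* For a permutation p of {1..n} and a thin section (\<open>{1..k}\<close>, \<open>{k+1..n}\<close>)
   crossed with the full partition, the marginal of p records exactly the prefix image
   \<open>p ` {1..k}\<close>.  Hence U^k consists of the functions on S_n that depend only on this
   k-set, and it is spanned by the indicators F_S of the events \<open>p ` {1..card S} = S\<close>,
   S a k-subset of {1..n}.  The model space U is therefore spanned by the F_S for all
   nonempty proper subsets S.  On every level k the F_S sum to the indicator of S_n,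
   so one may drop the F_S for the initial segments \<open>{1..k}\<close>, 2 \<le> k \<le> n-1.  The remaining
   2^n - n functions are linearly independent: a vanishing combination with
   coefficients d gives \<open>\<Sum>k. d (p ` {1..k}) = 0\<close> for every p; comparing two
   permutations that differ by an adjacent transposition shows that d is constant on
   each level, hence zero on levels \<ge> 2 and then, evaluating at the identity, on level 1.
   So dim U = 2^n - n, and the number of free parameters is 2^n - n - 1. *)

interpretation V: vector_space rscale
  by unfold_locales (auto simp: fun_eq_iff algebra_simps)

lemma sum_apply_fun: "(\<Sum>x\<in>A. g x) p = (\<Sum>x\<in>A. g x p)"
  by (induction A rule: infinite_finite_induct) auto

lemma sum_delta_at: "finite A \<Longrightarrow> x \<in> A \<Longrightarrow> (\<Sum>T\<in>A. if T = x then f T else 0) = f x"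
  by simp

section \<open>Permutations and their prefix images\<close>

lemma Sn_inj: "p \<in> Sn n \<Longrightarrow> inj p"
  unfolding Sn_def using permutes_inj by blast

lemma id_in_Sn: "id \<in> Sn n"
  unfolding Sn_def by (simp add: permutes_id)

lemma prefix_subset: "p \<in> Sn n \<Longrightarrow> k \<le> n \<Longrightarrow> p ` {1..k} \<subseteq> {1..n}"
  unfolding Sn_def using permutes_image[of p "{1..n}"] by auto

lemma card_prefix: "p \<in> Sn n \<Longrightarrow> card (p ` {1..k}) = k"
  by (simp add: card_image inj_on_subset[OF Sn_inj])

lemma suffix_image:
  assumes "p \<in> Sn n"
  shows "p ` {k+1..n} = {1..n} - p ` {1..k}"
proof -
  have "{k+1..n} = {1..n} - {1..k}" by auto
  then have "p ` {k+1..n} = p ` {1..n} - p ` {1..k}"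
    using Sn_inj[OF assms] by (simp add: image_set_diff)
  moreover have "p ` {1..n} = {1..n}" using assms unfolding Sn_def by (simp add: permutes_image)
  ultimately show ?thesis by simp
qed

lemma perm_of_list:
  assumes d: "distinct xs" and s: "set xs = {1..n}"
  shows "\<exists>p\<in>Sn n. \<forall>j\<le>n. p ` {1..j} = set (take j xs)"
proof -
  have len: "length xs = n" using distinct_card[OF d] s by simp
  define p where "p = (\<lambda>i. if i \<in> {1..n} then xs!(i-1) else i)"
  have img: "p ` {1..j} = set (take j xs)" if j: "j \<le> n" for j
  proof -
    have "{1..j} = Suc ` {0..<j}" by (auto simp: image_iff)
    then have "p ` {1..j} = (\<lambda>i. p (Suc i)) ` {0..<j}" by (metis image_image)
    also have "\<dots> = nth xs ` {0..<j}" using j unfolding p_def by (intro image_cong) auto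
    also have "\<dots> = set (take j xs)" using j len by (simp add: nth_image)
    finally show ?thesis .
  qed
  have im: "p ` {1..n} = {1..n}" using img[of n] len s by simp
  then have "inj_on p {1..n}" by (intro eq_card_imp_inj_on) auto
  then have "bij_betw p {1..n} {1..n}" using im by (simp add: bij_betw_def)
  then have "p permutes {1..n}" by (rule bij_imp_permutes) (auto simp: p_def)
  then show ?thesis using img unfolding Sn_def by auto
qed

text \<open>Two permutations whose prefix images agree except at position k, where they are
  S and S with a replaced by b.  This is the adjacent transposition used for independence.\<close>
lemma exchange_perms:
  assumes S: "S \<subseteq> {1..n}" "card S = k" "k \<in> {1..n-1}" "a \<in> S" "b \<in> {1..n}" "b \<notin> S"
  shows "\<exists>p\<in>Sn n. \<exists>q\<in>Sn n. p ` {1..k} = S \<and> q ` {1..k} = insert b (S - {a})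
           \<and> (\<forall>j\<in>{1..n-1} - {k}. p ` {1..j} = q ` {1..j})"
proof -
  have finS: "finite S" using S(1) finite_subset by blast
  define L1 where "L1 = sorted_list_of_set (S - {a})"
  define L2 where "L2 = sorted_list_of_set ({1..n} - insert b S)"
  have L1: "set L1 = S - {a}" "distinct L1" using finS by (auto simp: L1_def)
  have L2: "set L2 = {1..n} - insert b S" "distinct L2" by (auto simp: L2_def)
  have len1: "length L1 = k - 1"
    using distinct_card[OF L1(2)] S finS L1 by (simp add: card_Diff_singleton)
  then have k: "k = length L1 + 1" "k \<le> n" using S(3) by auto
  define xs where "xs = L1 @ a # b # L2"
  define ys where "ys = L1 @ b # a # L2"
  have "distinct xs" "set xs = {1..n}" using L1 L2 S unfolding xs_def by auto
  then obtain p where p: "p \<in> Sn n" "\<forall>j\<le>n. p ` {1..j} = set (take j xs)"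
    using perm_of_list by blast
  have "distinct ys" "set ys = {1..n}" using L1 L2 S unfolding ys_def by auto
  then obtain q where q: "q \<in> Sn n" "\<forall>j\<le>n. q ` {1..j} = set (take j ys)"
    using perm_of_list by blast
  have same_take: "set (take j xs) = set (take j ys)" if j: "j \<in> {1..n-1} - {k}" for j
  proof (cases "j < k")
    case True
    then show ?thesis using k by (simp add: xs_def ys_def)
  next
    case False
    have j_split: "j = length L1 + Suc (Suc (j - k - 1))" using False j k by auto
    show ?thesis by (subst (1 2) j_split) (auto simp: xs_def ys_def)
  qed
  have "p ` {1..j} = q ` {1..j}" if j: "j \<in> {1..n-1} - {k}" for j
  proof -
    have "j \<le> n" using j by auto
    then show ?thesis using p(2) q(2) same_take[OF j] by simp
  qed
  then have "\<forall>j\<in>{1..n-1} - {k}. p ` {1..j} = q ` {1..j}" by blast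
  moreover have "p ` {1..k} = S" using p(2) k L1 S(4) by (auto simp: xs_def)
  moreover have "q ` {1..k} = insert b (S - {a})" using q(2) k L1 by (auto simp: ys_def)
  ultimately show ?thesis using p(1) q(1) by blast
qed

section \<open>The spaces U^k for thin sections crossed with the full partition\<close>

lemma marginal_singleton: "inj p \<Longrightarrow> marginal p A {j} = (if j \<in> p ` A then 1 else 0)"
proof (cases "j \<in> p ` A")
  case True
  then obtain s where s: "s \<in> A" "j = p s" by auto
  assume "inj p"
  then have e: "{t. t \<in> A \<and> p t \<in> {j}} = {s}" using s by (auto dest: injD)
  show ?thesis using True unfolding marginal_def e by simp
next
  case False
  then have e: "{t. t \<in> A \<and> p t \<in> {j}} = {}" by auto
  show ?thesis using False unfolding marginal_def e by simp
qed

lemma thin_marginals_eq_iff: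
  assumes p: "p \<in> Sn n" and q: "q \<in> Sn n" and k: "k \<le> n"
  shows "(\<forall>A\<in>thin_section n k. \<forall>B\<in>full_partition n. marginal p A B = marginal q A B)
         \<longleftrightarrow> p ` {1..k} = q ` {1..k}"
proof
  assume m: "\<forall>A\<in>thin_section n k. \<forall>B\<in>full_partition n. marginal p A B = marginal q A B"
  have "j \<in> p ` {1..k} \<longleftrightarrow> j \<in> q ` {1..k}" if "j \<in> {1..n}" for j
  proof -
    have "{j} \<in> full_partition n" "{1..k} \<in> thin_section n k"
      using that by (auto simp: full_partition_def thin_section_def)
    then have "marginal p {1..k} {j} = marginal q {1..k} {j}" using m by blast
    then show ?thesis
      unfolding marginal_singleton[OF Sn_inj[OF p]] marginal_singleton[OF Sn_inj[OF q]]
      by (cases "j \<in> p ` {1..k}"; cases "j \<in> q ` {1..k}") simp_all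
  qed
  then show "p ` {1..k} = q ` {1..k}" using prefix_subset[OF p k] prefix_subset[OF q k] by blast
next
  assume e: "p ` {1..k} = q ` {1..k}"
  show "\<forall>A\<in>thin_section n k. \<forall>B\<in>full_partition n. marginal p A B = marginal q A B"
  proof (intro ballI)
    fix A B assume A: "A \<in> thin_section n k" and B: "B \<in> full_partition n"
    then obtain j where j: "B = {j}" by (auto simp: full_partition_def)
    have img: "p ` A = q ` A"
      using A e suffix_image[OF p, of k] suffix_image[OF q, of k] by (auto simp: thin_section_def)
    show "marginal p A B = marginal q A B"
      unfolding j marginal_singleton[OF Sn_inj[OF p]] marginal_singleton[OF Sn_inj[OF q]] img ..
  qed
qed

lemma UB_thin_full_iff:
  assumes "k \<le> n"
  shows "v \<in> UB n (thin_section n k) (full_partition n) \<longleftrightarrow>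
           (\<forall>p\<in>Sn n. \<forall>q\<in>Sn n. p ` {1..k} = q ` {1..k} \<longrightarrow> v p = v q)
           \<and> (\<forall>p. p \<notin> Sn n \<longrightarrow> v p = 0)"
  unfolding UB_def mem_Collect_eq by (simp add: thin_marginals_eq_iff[OF _ _ assms] cong: ball_cong)

section \<open>The spanning family of prefix indicators\<close>

definition prefix_indicator :: "nat \<Rightarrow> nat set \<Rightarrow> (nat \<Rightarrow> nat) \<Rightarrow> real" where
  "prefix_indicator n S = (\<lambda>p. if p \<in> Sn n \<and> p ` {1..card S} = S then 1 else 0)"

text \<open>Nonempty proper subsets of {1..n}: the possible prefix images \<open>p ` {1..k}\<close>,
  \<open>1 \<le> k \<le> n-1\<close>.\<close>
definition proper_subsets :: "nat \<Rightarrow> nat set set" where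
  "proper_subsets n = {S. S \<subseteq> {1..n} \<and> S \<noteq> {} \<and> S \<noteq> {1..n}}"

definition basis_subsets :: "nat \<Rightarrow> nat set set" where
  "basis_subsets n = proper_subsets n - {{1..k} | k. k \<in> {2..n-1}}"

abbreviation level :: "nat \<Rightarrow> nat \<Rightarrow> nat set set" where
  "level n k \<equiv> {T \<in> proper_subsets n. card T = k}"

lemma finite_proper_subsets: "finite (proper_subsets n)"
  unfolding proper_subsets_def by (rule finite_subset[of _ "Pow {1..n}"]) auto

lemma finite_level: "finite (level n k)"
  using finite_proper_subsets by simp

lemma proper_subset_card:
  assumes "S \<in> proper_subsets n"
  shows "card S \<in> {1..n-1}" "finite S"
proof -
  have s: "S \<subseteq> {1..n}" "S \<noteq> {}" "S \<noteq> {1..n}" using assms by (auto simp: proper_subsets_def)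
  then show f: "finite S" using finite_subset by blast
  have "card S < n" using s psubset_card_mono[of "{1..n}" S] by auto
  moreover have "card S \<ge> 1" using s f by (simp add: Suc_leI card_gt_0_iff)
  ultimately show "card S \<in> {1..n-1}" by auto
qed

lemma prefix_in_proper_subsets:
  assumes p: "p \<in> Sn n" and k: "k \<in> {1..n-1}"
  shows "p ` {1..k} \<in> level n k"
proof -
  have "k \<le> n" using k by auto
  then have "p ` {1..k} \<subseteq> {1..n}" by (rule prefix_subset[OF p])
  moreover have "card (p ` {1..k}) = k" by (rule card_prefix[OF p])
  ultimately show ?thesis using k by (auto simp: proper_subsets_def)
qed

lemma prefix_indicator_eval:
  "p \<in> Sn n \<Longrightarrow> card T = k \<Longrightarrow> prefix_indicator n T p = (if T = p ` {1..k} then 1 else 0)"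
  unfolding prefix_indicator_def by auto

lemma prefix_indicator_in_UB:
  assumes "S \<in> proper_subsets n"
  shows "prefix_indicator n S \<in> UB n (thin_section n (card S)) (full_partition n)"
proof -
  have k: "card S \<le> n" using proper_subset_card[OF assms] by auto
  show ?thesis unfolding UB_thin_full_iff[OF k] by (auto simp: prefix_indicator_def)
qed

lemma level_indicator_sum:
  assumes k: "k \<in> {1..n-1}"
  shows "(\<Sum>T\<in>level n k. prefix_indicator n T) = (\<lambda>p. if p \<in> Sn n then 1 else 0)"
proof
  fix p
  show "(\<Sum>T\<in>level n k. prefix_indicator n T) p = (if p \<in> Sn n then 1 else 0)"
  proof (cases "p \<in> Sn n")
    case True
    have "(\<Sum>T\<in>level n k. prefix_indicator n T) p
          = (\<Sum>T\<in>level n k. if T = p ` {1..k} then 1 else 0)"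
      unfolding sum_apply_fun by (intro sum.cong refl) (simp add: prefix_indicator_eval[OF True])
    also have "\<dots> = 1"
      using sum_delta_at[OF finite_level prefix_in_proper_subsets[OF True k]] .
    finally show ?thesis using True by simp
  qed (simp add: sum_apply_fun prefix_indicator_def)
qed

lemma UB_in_level_span:
  assumes k: "k \<in> {1..n-1}" and v: "v \<in> UB n (thin_section n k) (full_partition n)"
  shows "v \<in> V.span (prefix_indicator n ` level n k)"
proof -
  define rep where "rep T = (SOME q. q \<in> Sn n \<and> q ` {1..k} = T)" for T
  have kn: "k \<le> n" using k by auto
  have v_prefix: "\<forall>p\<in>Sn n. \<forall>q\<in>Sn n. p ` {1..k} = q ` {1..k} \<longrightarrow> v p = v q"
    and v_zero: "\<forall>p. p \<notin> Sn n \<longrightarrow> v p = 0"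
    using v UB_thin_full_iff[OF kn] by blast+
  have "v = (\<Sum>T\<in>level n k. rscale (v (rep T)) (prefix_indicator n T))" (is "v = ?r")
  proof
    fix p
    show "v p = ?r p"
    proof (cases "p \<in> Sn n")
      case True
      have "rep (p ` {1..k}) \<in> Sn n \<and> rep (p ` {1..k}) ` {1..k} = p ` {1..k}"
        unfolding rep_def by (rule someI[of _ p]) (simp add: True)
      then have "v p = v (rep (p ` {1..k}))" using v_prefix True by metis
      also have "\<dots> = (\<Sum>T\<in>level n k. if T = p ` {1..k} then v (rep T) else 0)"
        by (rule sum_delta_at[OF finite_level prefix_in_proper_subsets[OF True k], symmetric])
      also have "\<dots> = ?r p"
        unfolding sum_apply_fun by (intro sum.cong refl) (simp add: prefix_indicator_eval[OF True])
      finally show ?thesis .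
    qed (simp add: v_zero sum_apply_fun prefix_indicator_def)
  qed
  also have "\<dots> \<in> V.span (prefix_indicator n ` level n k)"
    by (intro V.span_sum V.span_scale V.span_base) auto
  finally show ?thesis .
qed

text \<open>Using the level sums, every indicator lies in the span of the basis indicators.\<close>
lemma prefix_indicator_in_basis_span:
  assumes n: "n \<ge> 2" and S: "S \<in> proper_subsets n"
  shows "prefix_indicator n S \<in> V.span (prefix_indicator n ` basis_subsets n)"
proof (cases "S \<in> basis_subsets n")
  case True then show ?thesis by (intro V.span_base) auto
next
  case False
  then obtain k where k: "k \<in> {2..n-1}" "S = {1..k}" using S unfolding basis_subsets_def by auto
  have Sin: "S \<in> level n k" using S k by simp
  have k1: "k \<in> {1..n-1}" "1 \<in> {1..n-1}" using k n by auto
  have eq: "prefix_indicator n S = (\<Sum>T\<in>level n 1. prefix_indicator n T)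
                                 - (\<Sum>T\<in>level n k - {S}. prefix_indicator n T)"
    using level_indicator_sum[OF k1(1)] level_indicator_sum[OF k1(2)]
      sum.remove[OF _ Sin, of "prefix_indicator n"] finite_proper_subsets
    by (simp add: eq_diff_eq)
  have "level n 1 \<subseteq> basis_subsets n" "level n k - {S} \<subseteq> basis_subsets n"
    using k unfolding basis_subsets_def by auto
  then show ?thesis unfolding eq
    by (intro V.span_diff V.span_sum V.span_base) auto
qed

lemma log_linear_space_eq:
  assumes n: "n \<ge> 2"
  shows "log_linear_space n {(thin_section n k, full_partition n) | k. k \<in> {1..n-1}}
         = V.span (prefix_indicator n ` basis_subsets n)"
proof -
  let ?X = "\<Union>(R,C)\<in>{(thin_section n k, full_partition n) | k. k \<in> {1..n-1}}. UB n R C"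
  let ?Y = "V.span (prefix_indicator n ` basis_subsets n)"
  have "?X \<subseteq> ?Y"
  proof
    fix v assume "v \<in> ?X"
    then obtain k where k: "k \<in> {1..n-1}" and v: "v \<in> UB n (thin_section n k) (full_partition n)"
      by auto
    have "prefix_indicator n ` level n k \<subseteq> ?Y"
      using prefix_indicator_in_basis_span[OF n] by auto
    then have "V.span (prefix_indicator n ` level n k) \<subseteq> ?Y"
      by (rule V.span_minimal[OF _ V.subspace_span])
    then show "v \<in> ?Y" using UB_in_level_span[OF k v] by blast
  qed
  then have "V.span ?X \<subseteq> ?Y" by (rule V.span_minimal[OF _ V.subspace_span])
  moreover have "prefix_indicator n ` basis_subsets n \<subseteq> ?X"
  proof
    fix x assume "x \<in> prefix_indicator n ` basis_subsets n"
    then obtain S where S: "S \<in> proper_subsets n" "x = prefix_indicator n S"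
      by (auto simp: basis_subsets_def)
    then show "x \<in> ?X" using prefix_indicator_in_UB[OF S(1)] proper_subset_card[OF S(1)] by blast
  qed
  then have "?Y \<subseteq> V.span ?X" by (rule V.span_mono)
  ultimately show ?thesis unfolding log_linear_space_def by (rule subset_antisym)
qed

section \<open>Linear independence of the basis indicators\<close>

lemma combination_at_perm:
  assumes p: "p \<in> Sn n"
  shows "(\<Sum>S\<in>proper_subsets n. d S * prefix_indicator n S p) = (\<Sum>k=1..n-1. d (p ` {1..k}))"
proof -
  let ?g = "\<lambda>k. p ` {1..k}"
  have inj: "inj_on ?g {1..n-1}" by (rule inj_onI) (metis card_prefix[OF p])
  have sub: "?g ` {1..n-1} \<subseteq> proper_subsets n" using prefix_in_proper_subsets[OF p] by auto
  have "(\<Sum>S\<in>proper_subsets n. d S * prefix_indicator n S p)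
        = (\<Sum>S\<in>?g ` {1..n-1}. d S * prefix_indicator n S p)"
  proof (rule sum.mono_neutral_right[OF finite_proper_subsets sub], intro ballI)
    fix S assume S: "S \<in> proper_subsets n - ?g ` {1..n-1}"
    then have "S \<noteq> p ` {1..card S}" using proper_subset_card by auto
    then show "d S * prefix_indicator n S p = 0" using prefix_indicator_eval[OF p] by simp
  qed
  also have "\<dots> = (\<Sum>k=1..n-1. d (?g k) * prefix_indicator n (?g k) p)"
    by (rule sum.reindex[OF inj, unfolded comp_def])
  also have "\<dots> = (\<Sum>k=1..n-1. d (?g k))"
    using prefix_indicator_eval[OF p] card_prefix[OF p] by simp
  finally show ?thesis .
qed

lemma exchange_invariance:
  assumes Z: "\<forall>p\<in>Sn n. (\<Sum>k=1..n-1. d (p ` {1..k})) = (0::real)"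
    and S: "S \<subseteq> {1..n}" "card S = k" "k \<in> {1..n-1}" "a \<in> S" "b \<in> {1..n}" "b \<notin> S"
  shows "d S = d (insert b (S - {a}))"
proof -
  obtain p q where pq: "p \<in> Sn n" "q \<in> Sn n" "p ` {1..k} = S" "q ` {1..k} = insert b (S - {a})"
    and agree: "\<forall>j\<in>{1..n-1} - {k}. p ` {1..j} = q ` {1..j}"
    using exchange_perms[OF S] by blast
  have split: "(\<Sum>j=1..n-1. d (r ` {1..j})) = d (r ` {1..k}) + (\<Sum>j\<in>{1..n-1} - {k}. d (r ` {1..j}))"
    for r using sum.remove[OF finite_atLeastAtMost S(3)] by simp
  have "(\<Sum>j\<in>{1..n-1} - {k}. d (p ` {1..j})) = (\<Sum>j\<in>{1..n-1} - {k}. d (q ` {1..j}))"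
    using agree by (intro sum.cong) auto
  then show ?thesis using Z pq split[of p] split[of q] by simp
qed

text \<open>Consequently d is constant on each level: connect two k-sets by exchanges.\<close>
lemma level_constant:
  assumes Z: "\<forall>p\<in>Sn n. (\<Sum>k=1..n-1. d (p ` {1..k})) = (0::real)"
    and S: "S \<in> proper_subsets n" and T: "T \<in> proper_subsets n" and c: "card S = card T"
  shows "d S = d T"
  using S c
proof (induction "card (S - T)" arbitrary: S)
  case 0
  have "S \<subseteq> T" using 0 proper_subset_card by auto
  then show ?case using card_subset_eq proper_subset_card(2)[OF T] 0 by metis
next
  case (Suc m)
  have fS: "finite S" and kS: "card S \<in> {1..n-1}"
    using proper_subset_card[OF Suc.prems(1)] by simp_all
  obtain a where a: "a \<in> S" "a \<notin> T" using Suc.hyps(2) by (metis Diff_eq_empty_iff card_0_eq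
        finite_Diff fS nat.distinct(1) subsetI)
  have "\<not> T \<subseteq> S" using card_subset_eq[OF fS] Suc.prems a by metis
  then obtain b where b: "b \<in> T" "b \<notin> S" by auto
  define S' where "S' = insert b (S - {a})"
  have sub: "S \<subseteq> {1..n}" "T \<subseteq> {1..n}" using Suc.prems T by (auto simp: proper_subsets_def)
  have "d S = d S'" unfolding S'_def
    by (rule exchange_invariance[OF Z sub(1) refl kS a(1)]) (use b sub in auto)
  moreover have cS': "card S' = card S" unfolding S'_def using fS a b
    by (simp add: card_Diff_singleton) (metis Suc_pred card_gt_0_iff empty_iff)
  moreover have "S' \<in> proper_subsets n"
    using cS' kS sub b unfolding S'_def proper_subsets_def by auto
  moreover have "S' - T = (S - T) - {a}" unfolding S'_def using b by auto
  then have "card (S' - T) = m" using Suc.hyps(2) a fS by (simp add: card_Diff_singleton)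
  ultimately show ?case using Suc.hyps(1) Suc.prems by metis
qed

lemma basis_coefficients_vanish:
  assumes n: "n \<ge> 2"
    and Z: "\<forall>p\<in>Sn n. (\<Sum>S\<in>basis_subsets n. c S * prefix_indicator n S p) = (0::real)"
  shows "\<forall>S\<in>basis_subsets n. c S = 0"
proof -
  define d where "d S = (if S \<in> basis_subsets n then c S else 0)" for S
  have sub: "basis_subsets n \<subseteq> proper_subsets n" unfolding basis_subsets_def by auto
  have Z': "\<forall>p\<in>Sn n. (\<Sum>k=1..n-1. d (p ` {1..k})) = 0"
  proof
    fix p assume p: "p \<in> Sn n"
    have "(\<Sum>S\<in>proper_subsets n. d S * prefix_indicator n S p)
          = (\<Sum>S\<in>basis_subsets n. c S * prefix_indicator n S p)"
      by (rule sum.mono_neutral_cong_right[OF finite_proper_subsets sub]) (auto simp: d_def)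
    then show "(\<Sum>k=1..n-1. d (p ` {1..k})) = 0" using combination_at_perm[OF p, of d] Z p by simp
  qed
  have seg: "{1..k} \<in> proper_subsets n" if "k \<in> {1..n-1}" for k
    using that by (auto simp: proper_subsets_def)
  have high: "d S = 0" if S: "S \<in> proper_subsets n" "card S \<ge> 2" for S
  proof -
    have k: "card S \<in> {1..n-1}" using proper_subset_card[OF S(1)] by simp
    then have "d S = d {1..card S}" using level_constant[OF Z' S(1) seg] by simp
    also have "\<dots> = 0" using S k unfolding d_def basis_subsets_def by auto
    finally show ?thesis .
  qed
  have "{1..n-1} = insert 1 {2..n-1}" using n by auto
  then have "(\<Sum>k=1..n-1. d {1..k}) = d {1} + (\<Sum>k=2..n-1. d {1..k})" by simp
  moreover have "(\<Sum>k=2..n-1. d {1..k}) = 0" using high seg by (intro sum.neutral) auto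
  ultimately have d1: "d {1} = 0" using Z'[rule_format, OF id_in_Sn] by simp
  have d_zero: "d S = 0" if S: "S \<in> proper_subsets n" for S
  proof (cases "card S = 1")
    case True
    have "{1} \<in> proper_subsets n" using seg[of 1] n by auto
    then show ?thesis using level_constant[OF Z' S] True d1 by simp
  next
    case False
    then show ?thesis using high S proper_subset_card[OF S] by simp
  qed
  show ?thesis
  proof
    fix S assume S: "S \<in> basis_subsets n"
    then have "d S = 0" using d_zero sub by blast
    then show "c S = 0" using S by (simp add: d_def)
  qed
qed

lemma basis_indicator_inj:
  assumes n: "n \<ge> 2"
  shows "inj_on (prefix_indicator n) (basis_subsets n)"
proof (rule inj_onI, rule ccontr)
  fix S T assume S: "S \<in> basis_subsets n" and T: "T \<in> basis_subsets n"
    and e: "prefix_indicator n S = prefix_indicator n T" and ne: "S \<noteq> T"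
  define c where "c U = (if U = S then 1 else if U = T then -1 else (0::real))" for U
  have fin: "finite (basis_subsets n)"
    using finite_proper_subsets unfolding basis_subsets_def by auto
  have "(\<Sum>U\<in>basis_subsets n. c U * prefix_indicator n U p)
        = prefix_indicator n S p - prefix_indicator n T p" for p
  proof -
    have "(\<Sum>U\<in>basis_subsets n. c U * prefix_indicator n U p)
          = (\<Sum>U\<in>basis_subsets n. (if U = S then prefix_indicator n S p else 0)
                                     + (if U = T then - prefix_indicator n T p else 0))"
      by (intro sum.cong refl) (auto simp: c_def ne)
    also have "\<dots> = prefix_indicator n S p - prefix_indicator n T p"
      using S T fin by (simp add: sum.distrib)
    finally show ?thesis .
  qed
  then have "c S = 0" using basis_coefficients_vanish[OF n] e S by simp
  then show False by (simp add: c_def)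
qed

lemma basis_indicator_independent:
  assumes n: "n \<ge> 2"
  shows "V.independent (prefix_indicator n ` basis_subsets n)"
proof (rule V.independent_if_scalars_zero)
  let ?F = "prefix_indicator n"
  show "finite (?F ` basis_subsets n)"
    using finite_proper_subsets unfolding basis_subsets_def by auto
  fix f x assume sum0: "(\<Sum>x\<in>?F ` basis_subsets n. rscale (f x) x) = 0"
    and x: "x \<in> ?F ` basis_subsets n"
  have combination: "(\<Sum>S\<in>basis_subsets n. rscale (f (?F S)) (?F S)) = 0"
    using sum0 sum.reindex[OF basis_indicator_inj[OF n], of "\<lambda>x. rscale (f x) x"]
    by (simp add: comp_def)
  have "(\<Sum>S\<in>basis_subsets n. f (?F S) * ?F S p) = 0" for p
  proof -
    have "(\<Sum>S\<in>basis_subsets n. rscale (f (?F S)) (?F S)) p = 0" by (simp add: combination)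
    then show ?thesis by (simp only: sum_apply_fun)
  qed
  then have "\<forall>p\<in>Sn n. (\<Sum>S\<in>basis_subsets n. f (?F S) * ?F S p) = 0" by blast
  then have "\<forall>S\<in>basis_subsets n. f (?F S) = 0" by (rule basis_coefficients_vanish[OF n])
  then show "f x = 0" using x by auto
qed

lemma card_basis_subsets:
  assumes n: "n \<ge> 2"
  shows "card (basis_subsets n) = 2^n - n"
proof -
  let ?R = "(\<lambda>k. {1..k}) ` {2..n-1}"
  have R: "basis_subsets n = proper_subsets n - ?R" "?R \<subseteq> proper_subsets n"
    unfolding basis_subsets_def proper_subsets_def by auto
  have "inj_on (\<lambda>k::nat. {1..k}) {2..n-1}" by (rule inj_onI) (metis card_atLeastAtMost diff_Suc_1)
  then have cR: "card ?R = n - 2" by (simp add: card_image)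
  have "proper_subsets n = Pow {1..n} - {{}, {1..n}}" unfolding proper_subsets_def by auto
  then have cP: "card (proper_subsets n) = 2^n - 2" using n by (simp add: card_Diff_subset card_Pow)
  have "card (basis_subsets n) = card (proper_subsets n) - card ?R"
    unfolding R(1) by (rule card_Diff_subset[OF finite_subset[OF R(2) finite_proper_subsets] R(2)])
  also have "\<dots> = 2^n - n" using cP cR n less_exp[of n] by simp
  finally show ?thesis .
qed

lemma binomial_row_sum_minus_one: "(\<Sum>i=1..n. (n choose i) - 1) = 2^n - n - 1"
proof -
  have "(\<Sum>i=1..n. (n choose i) - 1) = (\<Sum>i=1..n. n choose i) - (\<Sum>i=1..n. 1)"
    by (rule sum_subtractf_nat) (simp add: Suc_leI)
  moreover have "{..n} = insert 0 {1..n}" by auto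
  then have "(\<Sum>i=1..n. n choose i) = 2^n - 1" using choose_row_sum[of n] by simp
  ultimately show ?thesis by simp
qed

theorem mainTheorem11:
  fixes n :: nat
  assumes "n \<ge> 2"
  shows "num_free_params n {(thin_section n k, full_partition n) | k. k \<in> {1..n-1}}
           = (\<Sum>i=1..n. (n choose i) - 1)
       \<and> (\<Sum>i=1..n. (n choose i) - 1) = 2^n - n - 1"
proof -
  let ?F = "prefix_indicator n"
  have "num_free_params n {(thin_section n k, full_partition n) | k. k \<in> {1..n-1}}
        = V.dim (V.span (?F ` basis_subsets n)) - 1"
    unfolding num_free_params_def log_linear_space_eq[OF assms] ..
  also have "\<dots> = card (?F ` basis_subsets n) - 1"
    using V.dim_span_eq_card_independent[OF basis_indicator_independent[OF assms]] by simp
  also have "\<dots> = 2^n - n - 1"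
    using card_image[OF basis_indicator_inj[OF assms]] card_basis_subsets[OF assms] by simp
  finally show ?thesis using binomial_row_sum_minus_one by simp
qed

end
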